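(* Let $d$ and $K\ge 2$ be integers with $d\ge K$, and let $\hat{\mathbf{W}}_{\rm ETF}=[\hat{\mathbf{w}}_1,\dots,\hat{\mathbf{w}}_K]\in\mathbb{R}^{d\times K}$ be a simplex equiangular tight frame, i.e. $\hat{\mathbf{W}}_{\rm ETF}=\sqrt{\frac{K}{K-1}}\,\mathbf{U}\left(\mathbf{I}_K-\frac{1}{K}\mathbf{1}_K\mathbf{1}_K^T\right)$ for some $\mathbf{U}\in\mathbb{R}^{d\times K}$ with $\mathbf{U}^T\mathbf{U}=\mathbf{I}_K$ (so that $\hat{\mathbf{w}}_{k}^T\hat{\mathbf{w}}_{k'}=\frac{K}{K-1}\delta_{k,k'}-\frac{1}{K-1}$ for all $k,k'\in[1,K]$). Consider $T+1$ sessions $t=0,1,\dots,T$. The label space $\{1,\dots,K\}$ is partitioned into pairwise disjoint nonempty sets $\mathcal{C}^{(0)},\dots,\mathcal{C}^{(T)}$, where session $t$ contains the $K^{(t)}=|\mathcal{C}^{(t)}|$ classes of $\mathcal{C}^{(t)}$, so $K=\sum_{t=0}^T K^{(t)}$. Each class $k$ has $n_k\ge 1$ samples (the $n_k$ may be arbitrary and the $K^{(t)}$ may differ across sessions), and session $t$ has $N^{(t)}=\sum_{k\in\mathcal{C}^{(t)}} n_k$ samples. For each session $t$ consider the problem $$\min_{\mathbf{M}^{(t)}}\ \frac{1}{N^{(t)}}\sum_{k\in\mathcal{C}^{(t)}}\sum_{i=1}^{n_k}\mathcal{L}\left(\mathbf{m}^{(t)}_{k,i},\hat{\mathbf{W}}_{\rm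 ETF}\right)\quad\text{s.t.}\quad \|\mathbf{m}^{(t)}_{k,i}\|^2\le 1\ \ \forall k\in\mathcal{C}^{(t)},\ 1\le i\le n_k,$$ where $\mathbf{m}^{(t)}_{k,i}\in\mathbb{R}^d$ is a free feature variable for the $i$-th sample of class $k$ in session $t$, $\mathbf{M}^{(t)}\in\mathbb{R}^{d\times N^{(t)}}$ is the collection of these variables, and $\hat{\mathbf{W}}_{\rm ETF}$ is held fixed. The loss $\mathcal{L}$ for a feature $\mathbf{m}$ of class $k$ is either the cross-entropy loss $\mathcal{L}(\mathbf{m},\hat{\mathbf{W}}_{\rm ETF})=-\log\frac{\exp(\hat{\mathbf{w}}_k^T\mathbf{m})}{\sum_{j=1}^K\exp(\hat{\mathbf{w}}_j^T\mathbf{m})}$ or the dot-regression loss $\mathcal{L}(\mathbf{m},\hat{\mathbf{W}}_{\rm ETF})=\frac{1}{2}\left(\hat{\mathbf{w}}_k^T\mathbf{m}-1\right)^2$. Let $\hat{\mathbf{M}}^{(t)}$ denote the global minimizer of this problem for session $t$, obtained by optimizing incrementally for $t=0,1,\dots,T$, and let $\hat{\mathbf{M}}=[\hat{\mathbf{M}}^{(0)},\dots,\hat{\mathbf{M}}^{(T)}]\in\mathbb{R}^{d\times\sum_{t=0}^T N^{(t)}}$. Then, for either choice of loss, every column $\hat{\mathbf{m}}_{k,i}$ of $\hat{\mathbf{M}}$ with class label $k$ satisfies $$\|\hat{\mathbf{m}}_{k,i}\|=1,\qquad \hat{\mathbf{m}}_{k,i}^T\hat{\mathbf{w}}_{k'}=\frac{K}{K-1}\delta_{k,k'}-\frac{1}{K-1}\quad\forall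 k,k'\in[1,K],\ 1\le i\le n_k,$$ where $\delta_{k,k'}=1$ if $k=k'$ and $0$ otherwise.
   Context: This is a simplified ("unconstrained features") model of few-shot class-incremental learning: the backbone network is dropped and the last-layer features are treated as independent optimization variables, while the classifier is a fixed simplex ETF covering the whole label space of all sessions. $\mathbf{I}_K$ is the $K\times K$ identity matrix and $\mathbf{1}_K$ the all-ones vector in $\mathbb{R}^K$. *)

theory Defs
  imports "HOL-Analysis.Analysis"
begin

text \<open>Classes are labelled 1..K, samples of class k are labelled 1..n k.
  Vectors in R^d are represented as real^'d with d = CARD('d).\<close>

definition etf_col :: "nat \<Rightarrow> (nat \<Rightarrow> real ^ 'd) \<Rightarrow> nat \<Rightarrow> real ^ 'd" where
  "etf_col K U k = sqrt (real K / (real K - 1)) *\<^sub>R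
      (\<Sum>j\<in>{1..K}. ((if j = k then 1 else 0) - 1 / real K) *\<^sub>R U j)"

definition orthonormal_cols :: "nat \<Rightarrow> (nat \<Rightarrow> real ^ 'd) \<Rightarrow> bool" where
  "orthonormal_cols K U \<longleftrightarrow>
     (\<forall>j\<in>{1..K}. \<forall>l\<in>{1..K}. U j \<bullet> U l = (if j = l then 1 else 0))"

datatype loss_kind = CrossEntropy | DotRegression

definition loss :: "loss_kind \<Rightarrow> nat \<Rightarrow> (nat \<Rightarrow> real ^ 'd) \<Rightarrow> nat \<Rightarrow> real ^ 'd \<Rightarrow> real" where
  "loss L K W k m = (case L of
      CrossEntropy \<Rightarrow> - ln (exp (W k \<bullet> m) / (\<Sum>j\<in>{1..K}. exp (W j \<bullet> m)))
    | DotRegression \<Rightarrow> (1/2) * (W k \<bullet> m - 1)^2)"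

definition session_obj ::
  "loss_kind \<Rightarrow> nat \<Rightarrow> (nat \<Rightarrow> real ^ 'd) \<Rightarrow> (nat \<Rightarrow> nat) \<Rightarrow> nat set
     \<Rightarrow> (nat \<Rightarrow> nat \<Rightarrow> real ^ 'd) \<Rightarrow> real" where
  "session_obj L K W n C M =
     (1 / real (\<Sum>k\<in>C. n k)) * (\<Sum>k\<in>C. \<Sum>i\<in>{1..n k}. loss L K W k (M k i))"

definition session_feasible :: "(nat \<Rightarrow> nat) \<Rightarrow> nat set \<Rightarrow> (nat \<Rightarrow> nat \<Rightarrow> real ^ 'd) \<Rightarrow> bool" where
  "session_feasible n C M \<longleftrightarrow> (\<forall>k\<in>C. \<forall>i\<in>{1..n k}. (norm (M k i))^2 \<le> 1)"

definition session_global_min ::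
  "loss_kind \<Rightarrow> nat \<Rightarrow> (nat \<Rightarrow> real ^ 'd) \<Rightarrow> (nat \<Rightarrow> nat) \<Rightarrow> nat set
     \<Rightarrow> (nat \<Rightarrow> nat \<Rightarrow> real ^ 'd) \<Rightarrow> bool" where
  "session_global_min L K W n C M \<longleftrightarrow>
     session_feasible n C M \<and>
     (\<forall>M'. session_feasible n C M' \<longrightarrow> session_obj L K W n C M \<le> session_obj L K W n C M')"

end

theory Submission
  imports Defs
begin

text \<open>
  The session problems decouple over samples: replacing one feature of a global minimiser by the
  class vector \<open>w\<^sub>k\<close> keeps it feasible, so every minimising feature \<open>m\<close> of class \<open>k\<close> satisfies
  \<open>loss m \<le> loss w\<^sub>k\<close>. For dot regression this forces \<open>w\<^sub>k \<bullet> m = 1\<close>. For cross-entropy, the ETF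
  columns sum to zero, so the mean of the logit gaps \<open>w\<^sub>j \<bullet> m - w\<^sub>k \<bullet> m\<close> (\<open>j \<noteq> k\<close>) is
  \<open>-K (w\<^sub>k \<bullet> m) / (K - 1)\<close>; convexity of \<open>exp\<close> bounds the loss below by a strictly decreasing function
  of \<open>w\<^sub>k \<bullet> m\<close> that is attained at \<open>m = w\<^sub>k\<close>, which again forces \<open>w\<^sub>k \<bullet> m \<ge> 1\<close>. On the unit ball
  this means \<open>m = w\<^sub>k\<close>, and the inner products of \<open>w\<^sub>k\<close> with the classifier are those of the ETF.
\<close>

definition simplex_etf :: "nat \<Rightarrow> (nat \<Rightarrow> 'a::real_inner) \<Rightarrow> bool" where
  "simplex_etf K W \<longleftrightarrow>
     (\<forall>j\<in>{1..K}. \<forall>l\<in>{1..K}.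
        W j \<bullet> W l = real K / (real K - 1) * (if j = l then 1 else 0) - 1 / (real K - 1))"

lemma etf_col_eq:
  assumes "k \<in> {1..K}"
  shows "etf_col K U k = sqrt (real K / (real K - 1)) *\<^sub>R (U k - (1 / real K) *\<^sub>R (\<Sum>j\<in>{1..K}. U j))"
proof -
  have "((if j = k then 1 else 0) - 1 / real K) *\<^sub>R U j = (if j = k then U j else 0) - (1 / real K) *\<^sub>R U j"
    for j by (simp add: scaleR_left_diff_distrib)
  then show ?thesis
    using assms by (simp add: etf_col_def sum_subtractf scaleR_sum_right)
qed

lemma simplex_etf_etf_col:
  fixes U :: "nat \<Rightarrow> real ^ 'd"
  assumes K2: "K \<ge> 2" and U: "orthonormal_cols K U"
  shows "simplex_etf K (etf_col K U)"
  unfolding simplex_etf_def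
proof (intro ballI)
  fix k l assume k: "k \<in> {1..K}" and l: "l \<in> {1..K}"
  define S where "S = (\<Sum>j\<in>{1..K}. U j)"
  have US: "U a \<bullet> S = 1" if "a \<in> {1..K}" for a
  proof -
    have "U a \<bullet> S = (\<Sum>j\<in>{1..K}. if a = j then 1 else 0)"
      using U that unfolding S_def orthonormal_cols_def inner_sum_right by (intro sum.cong) auto
    then show ?thesis using that by simp
  qed
  have SS: "S \<bullet> S = real K"
    using US by (simp add: S_def inner_sum_left)
  have "etf_col K U k \<bullet> etf_col K U l
      = real K / (real K - 1) * ((U k - (1 / real K) *\<^sub>R S) \<bullet> (U l - (1 / real K) *\<^sub>R S))"
    using etf_col_eq[OF k, of U] etf_col_eq[OF l, of U] K2 by (simp add: S_def mult.assoc[symmetric])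
  also have "(U k - (1 / real K) *\<^sub>R S) \<bullet> (U l - (1 / real K) *\<^sub>R S) = (if k = l then 1 else 0) - 1 / real K"
    using US[OF k] US[OF l] SS U k l K2 unfolding orthonormal_cols_def
    by (simp add: inner_diff_left inner_diff_right inner_commute field_simps)
  also have "real K / (real K - 1) * ((if k = l then 1 else 0) - 1 / real K)
      = real K / (real K - 1) * (if k = l then 1 else 0) - 1 / (real K - 1)"
    using K2 by (simp add: right_diff_distrib)
  finally show "etf_col K U k \<bullet> etf_col K U l
      = real K / (real K - 1) * (if k = l then 1 else 0) - 1 / (real K - 1)" .
qed

lemma simplex_etf_inner_self:
  assumes "K \<ge> 2" "simplex_etf K W" "k \<in> {1..K}"
  shows "W k \<bullet> W k = 1"
  using assms by (simp add: simplex_etf_def diff_divide_distrib[symmetric])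

lemma simplex_etf_norm:
  assumes "K \<ge> 2" "simplex_etf K W" "k \<in> {1..K}"
  shows "norm (W k) = 1"
  using simplex_etf_inner_self[OF assms] by (simp add: norm_eq_sqrt_inner)

lemma simplex_etf_sum_eq_0:
  assumes W: "simplex_etf K W"
  shows "(\<Sum>j\<in>{1..K}. W j) = 0"
proof -
  have "W j \<bullet> (\<Sum>l\<in>{1..K}. W l) = 0" if j: "j \<in> {1..K}" for j
  proof -
    have "W j \<bullet> (\<Sum>l\<in>{1..K}. W l)
        = (\<Sum>l\<in>{1..K}. real K / (real K - 1) * (if j = l then 1 else 0) - 1 / (real K - 1))"
      using W j unfolding simplex_etf_def inner_sum_right by (intro sum.cong) auto
    also have "\<dots> = 0"
      using j by (simp add: sum_subtractf if_distrib[of "\<lambda>c. _ * c"] cong: if_cong)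
    finally show ?thesis .
  qed
  then have "(\<Sum>j\<in>{1..K}. W j) \<bullet> (\<Sum>l\<in>{1..K}. W l) = 0"
    by (simp add: inner_sum_left)
  then show ?thesis by simp
qed

lemma eq_of_inner_ge_one:
  fixes w m :: "'a::real_inner"
  assumes "norm w = 1" "norm m \<le> 1" "1 \<le> w \<bullet> m"
  shows "m = w"
proof -
  have "(norm (m - w))\<^sup>2 = (norm m)\<^sup>2 - 2 * (w \<bullet> m) + (norm w)\<^sup>2"
    by (simp add: power2_norm_eq_inner inner_diff_left inner_diff_right inner_commute)
  also have "\<dots> \<le> 0"
    using assms power_le_one[of "norm m" 2] by simp
  finally show ?thesis by simp
qed

lemma card_mult_exp_mean_le_sum_exp:
  fixes x :: "'a \<Rightarrow> real"
  assumes "finite A"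
  shows "real (card A) * exp (sum x A / real (card A)) \<le> (\<Sum>j\<in>A. exp (x j))"
proof (cases "A = {}")
  case False
  define c where "c = sum x A / real (card A)"
  have "real (card A) * exp c = (\<Sum>j\<in>A. exp c * (1 + (x j - c)))"
    using assms False by (simp add: c_def sum.distrib sum_subtractf flip: sum_distrib_left)
  also have "\<dots> \<le> (\<Sum>j\<in>A. exp (x j))"
  proof (rule sum_mono)
    fix j
    have "exp c * (1 + (x j - c)) \<le> exp c * exp (x j - c)"
      by (intro mult_left_mono exp_ge_add_one_self) simp
    then show "exp c * (1 + (x j - c)) \<le> exp (x j)"
      by (simp add: exp_diff)
  qed
  finally show ?thesis by (simp add: c_def)
qed simp

lemma loss_cross_entropy_eq_ln_sum_exp:
  assumes "k \<in> {1..K}"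
  shows "loss CrossEntropy K W k m = ln (1 + (\<Sum>j\<in>{1..K} - {k}. exp (W j \<bullet> m - W k \<bullet> m)))"
proof -
  have "exp (W k \<bullet> m) / (\<Sum>j\<in>{1..K}. exp (W j \<bullet> m))
      = inverse (\<Sum>j\<in>{1..K}. exp (W j \<bullet> m - W k \<bullet> m))"
    by (simp add: exp_diff flip: sum_divide_distrib)
  moreover have "(\<Sum>j\<in>{1..K}. exp (W j \<bullet> m - W k \<bullet> m))
      = 1 + (\<Sum>j\<in>{1..K} - {k}. exp (W j \<bullet> m - W k \<bullet> m))"
    using assms by (simp add: sum.remove)
  moreover have "0 < (\<Sum>j\<in>{1..K}. exp (W j \<bullet> m - W k \<bullet> m))"
    using assms by (intro sum_pos) auto
  ultimately show ?thesis
    by (simp add: loss_def ln_inverse)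
qed

lemma loss_cross_entropy_ge:
  assumes k: "k \<in> {1..K}" and W: "(\<Sum>j\<in>{1..K}. W j) = 0"
  shows "ln (1 + (real K - 1) * exp (- (real K * (W k \<bullet> m)) / (real K - 1)))
           \<le> loss CrossEntropy K W k m"
proof -
  let ?A = "{1..K} - {k}"
  have card: "real (card ?A) = real K - 1"
    using k by simp
  have "(\<Sum>j\<in>?A. W j \<bullet> m) = - (W k \<bullet> m)"
    using W k by (simp add: sum_diff1 flip: inner_sum_left)
  then have "(\<Sum>j\<in>?A. W j \<bullet> m - W k \<bullet> m) = - (real K * (W k \<bullet> m))"
    by (simp only: sum_subtractf sum_constant card) (simp add: algebra_simps)
  then have "(real K - 1) * exp (- (real K * (W k \<bullet> m)) / (real K - 1))
      \<le> (\<Sum>j\<in>?A. exp (W j \<bullet> m - W k \<bullet> m))"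
    using card_mult_exp_mean_le_sum_exp[of ?A "\<lambda>j. W j \<bullet> m - W k \<bullet> m"] card by simp
  then show ?thesis
    using k by (simp add: loss_cross_entropy_eq_ln_sum_exp add_pos_nonneg sum_nonneg)
qed

lemma loss_cross_entropy_class_vector:
  assumes "K \<ge> 2" "simplex_etf K W" "k \<in> {1..K}"
  shows "loss CrossEntropy K W k (W k) = ln (1 + (real K - 1) * exp (- real K / (real K - 1)))"
proof -
  have "exp (W j \<bullet> W k - W k \<bullet> W k) = exp (- real K / (real K - 1))" if "j \<in> {1..K} - {k}" for j
  proof -
    have "W j \<bullet> W k - W k \<bullet> W k = - 1 / (real K - 1) - 1"
      using assms that simplex_etf_inner_self[OF assms] by (auto simp: simplex_etf_def)
    also have "\<dots> = - real K / (real K - 1)"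
      using assms(1) by (simp add: field_simps)
    finally show ?thesis by simp
  qed
  then show ?thesis
    using assms by (simp add: loss_cross_entropy_eq_ln_sum_exp)
qed

lemma inner_ge_one_of_loss_le_loss_class_vector:
  assumes K2: "K \<ge> 2" and W: "simplex_etf K W" and k: "k \<in> {1..K}"
    and le: "loss L K W k m \<le> loss L K W k (W k)"
  shows "1 \<le> W k \<bullet> m"
proof (cases L)
  case DotRegression
  then have "(W k \<bullet> m - 1)\<^sup>2 \<le> 0"
    using le simplex_etf_inner_self[OF K2 W k] by (simp add: loss_def)
  then show ?thesis by simp
next
  case CrossEntropy
  have K1: "real K - 1 > 0" using K2 by simp
  have "ln (1 + (real K - 1) * exp (- (real K * (W k \<bullet> m)) / (real K - 1)))
      \<le> ln (1 + (real K - 1) * exp (- real K / (real K - 1)))"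
    using loss_cross_entropy_ge[OF k simplex_etf_sum_eq_0[OF W], of m]
      loss_cross_entropy_class_vector[OF K2 W k] le CrossEntropy by simp
  then have "exp (- (real K * (W k \<bullet> m)) / (real K - 1)) \<le> exp (- real K / (real K - 1))"
    using K1 by (simp add: add_pos_nonneg)
  then show ?thesis
    using K1 by (simp add: divide_le_cancel)
qed

lemma session_global_min_loss_le:
  assumes min: "session_global_min L K W n C M" and C: "finite C" "k \<in> C"
    and i: "i \<in> {1..n k}" and v: "(norm v)\<^sup>2 \<le> 1"
  shows "loss L K W k (M k i) \<le> loss L K W k v"
proof -
  define M' where "M' = M(k := (M k)(i := v))"
  define total where "total M = (\<Sum>k\<in>C. \<Sum>i\<in>{1..n k}. loss L K W k (M k i))"
    for M :: "nat \<Rightarrow> nat \<Rightarrow> real ^ 'a"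
  have "session_feasible n C M'"
    using min v unfolding session_global_min_def session_feasible_def M'_def by auto
  then have "session_obj L K W n C M \<le> session_obj L K W n C M'"
    using min unfolding session_global_min_def by blast
  moreover have "0 < (\<Sum>k\<in>C. real (n k))"
    using C i by (intro sum_pos2[of C k]) auto
  ultimately have "total M \<le> total M'"
    by (simp add: session_obj_def total_def divide_le_cancel)
  also have "total M' = total M + (loss L K W k v - loss L K W k (M k i))"
  proof -
    have "total M' = (\<Sum>k'\<in>C. \<Sum>i'\<in>{1..n k'}. loss L K W k' (M k' i')
        + (if k' = k \<and> i' = i then loss L K W k v - loss L K W k (M k i) else 0))"
      unfolding total_def M'_def by (intro sum.cong) auto
    also have "\<dots> = total M + (\<Sum>k'\<in>C. if k' = k then loss L K W k v - loss L K W k (M k i) else 0)"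
      unfolding total_def sum.distrib using i by (intro arg_cong2[where f = "(+)"] sum.cong) auto
    finally show ?thesis
      using C by simp
  qed
  finally show ?thesis by simp
qed

theorem theorem1:
  fixes K T :: nat
    and U :: "nat \<Rightarrow> real ^ 'd"
    and C :: "nat \<Rightarrow> nat set"
    and n :: "nat \<Rightarrow> nat"
    and L :: loss_kind
    and Mhat :: "nat \<Rightarrow> nat \<Rightarrow> nat \<Rightarrow> real ^ 'd"
  assumes K2: "K \<ge> 2"
    and dK: "CARD('d) \<ge> K"
    and U_orth: "orthonormal_cols K U"
    and C_nonempty: "\<forall>t\<in>{0..T}. C t \<noteq> {}"
    and C_disj: "\<forall>t\<in>{0..T}. \<forall>s\<in>{0..T}. t \<noteq> s \<longrightarrow> C t \<inter> C s = {}"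
    and C_cover: "(\<Union>t\<in>{0..T}. C t) = {1..K}"
    and n_pos: "\<forall>k\<in>{1..K}. n k \<ge> 1"
    and Mhat_min: "\<forall>t\<in>{0..T}. session_global_min L K (etf_col K U) n (C t) (Mhat t)"
  shows "\<forall>t\<in>{0..T}. \<forall>k\<in>C t. \<forall>i\<in>{1..n k}.
           norm (Mhat t k i) = 1 \<and>
           (\<forall>k'\<in>{1..K}. Mhat t k i \<bullet> etf_col K U k' =
              real K / (real K - 1) * (if k = k' then 1 else 0) - 1 / (real K - 1))"
proof (intro ballI)
  fix t k i assume t: "t \<in> {0..T}" and kC: "k \<in> C t" and i: "i \<in> {1..n k}"
  let ?W = "etf_col K U"
  have W: "simplex_etf K ?W" using simplex_etf_etf_col[OF K2 U_orth] .
  have "C t \<subseteq> {1..K}" using C_cover t by blast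
  then have k: "k \<in> {1..K}" and C: "finite (C t)"
    using kC finite_subset by auto
  have min: "session_global_min L K ?W n (C t) (Mhat t)" using Mhat_min t by blast
  have "loss L K ?W k (Mhat t k i) \<le> loss L K ?W k (?W k)"
    using session_global_min_loss_le[OF min C kC i] simplex_etf_norm[OF K2 W k] by simp
  then have "1 \<le> ?W k \<bullet> Mhat t k i"
    using inner_ge_one_of_loss_le_loss_class_vector[OF K2 W k] by blast
  moreover have "norm (Mhat t k i) \<le> 1"
    using min kC i by (simp add: session_global_min_def session_feasible_def power_le_one_iff)
  ultimately have "Mhat t k i = ?W k"
    using eq_of_inner_ge_one simplex_etf_norm[OF K2 W k] by blast
  then show "norm (Mhat t k i) = 1 \<and>
      (\<forall>k'\<in>{1..K}. Mhat t k i \<bullet> ?W k' =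
         real K / (real K - 1) * (if k = k' then 1 else 0) - 1 / (real K - 1))"
    using W k simplex_etf_norm[OF K2 W k] by (simp add: simplex_etf_def)
qed

end
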